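(* Let $k,l$ be positive integers. If $\mathcal{F}\subset[k]\times[l]$ does not contain three distinct elements $\mathbf u,\mathbf v,\mathbf w$ with $\mathbf u=\mathbf v\vee\mathbf w$, then $|\mathcal{F}|\le k+l$.
   Context: For $\mathbf v,\mathbf w\in[k]\times[l]$, $\mathbf v\vee\mathbf w$ is the coordinatewise maximum of $\mathbf v$ and $\mathbf w$. *)

theory Defs
  imports Main
begin

definition vjoin :: "nat \<times> nat \<Rightarrow> nat \<times> nat \<Rightarrow> nat \<times> nat" where
  "vjoin v w = (max (fst v) (fst w), max (snd v) (snd w))"

end

theory Submission
  imports Defs
begin

text \<open>Every element u of F is the lowest point of its column or the leftmost point of its row:
  otherwise u is the join of a point strictly below it in its column and a point strictly to its
  left in its row. A column contains at most one lowest point and a row at most one leftmost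
  point, so there are at most k + l such elements.\<close>

definition column_minima :: "('a \<times> 'b::linorder) set \<Rightarrow> ('a \<times> 'b) set" where
  "column_minima F = {u \<in> F. \<forall>v\<in>F. fst v = fst u \<longrightarrow> snd u \<le> snd v}"

definition row_minima :: "('a::linorder \<times> 'b) set \<Rightarrow> ('a \<times> 'b) set" where
  "row_minima F = {u \<in> F. \<forall>v\<in>F. snd v = snd u \<longrightarrow> fst u \<le> fst v}"

definition join_free :: "(nat \<times> nat) set \<Rightarrow> bool" where
  "join_free F \<longleftrightarrow>
     \<not> (\<exists>u\<in>F. \<exists>v\<in>F. \<exists>w\<in>F. u \<noteq> v \<and> u \<noteq> w \<and> v \<noteq> w \<and> u = vjoin v w)"

lemma inj_on_fst_column_minima: "inj_on fst (column_minima F)"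
  by (rule inj_onI) (auto simp: column_minima_def prod_eq_iff intro: order.antisym)

lemma inj_on_snd_row_minima: "inj_on snd (row_minima F)"
  by (rule inj_onI) (auto simp: row_minima_def prod_eq_iff intro: order.antisym)

lemma card_column_minima_le:
  assumes "finite A" and "fst ` F \<subseteq> A"
  shows "card (column_minima F) \<le> card A"
  using card_inj_on_le[OF inj_on_fst_column_minima _ assms(1)] assms(2)
  by (auto simp: column_minima_def)

lemma card_row_minima_le:
  assumes "finite B" and "snd ` F \<subseteq> B"
  shows "card (row_minima F) \<le> card B"
  using card_inj_on_le[OF inj_on_snd_row_minima _ assms(1)] assms(2)
  by (auto simp: row_minima_def)

lemma join_free_subset_minima:
  assumes "join_free F"
  shows "F \<subseteq> column_minima F \<union> row_minima F"
proof
  fix u assume u: "u \<in> F"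
  show "u \<in> column_minima F \<union> row_minima F"
  proof (rule ccontr)
    assume "u \<notin> column_minima F \<union> row_minima F"
    then obtain v w where v: "v \<in> F" "fst v = fst u" "snd v < snd u"
      and w: "w \<in> F" "snd w = snd u" "fst w < fst u"
      using u unfolding column_minima_def row_minima_def by force
    have "u = vjoin v w"
      using v w by (cases u, cases v, cases w) (auto simp: vjoin_def)
    moreover have "u \<noteq> v" "u \<noteq> w" "v \<noteq> w" using v w by auto
    ultimately show False using assms u v w unfolding join_free_def by blast
  qed
qed

theorem mainTheorem8:
  fixes k l :: nat and F :: "(nat \<times> nat) set"
  assumes "k > 0" and "l > 0"
    and "F \<subseteq> {1..k} \<times> {1..l}"
    and "\<not> (\<exists>u\<in>F. \<exists>v\<in>F. \<exists>w\<in>F. u \<noteq> v \<and> u \<noteq> w \<and> v \<noteq> w \<and> u = vjoin v w)"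
  shows "card F \<le> k + l"
proof -
  have "finite F" using assms(3) finite_subset by blast
  then have "finite (column_minima F)" "finite (row_minima F)"
    by (auto simp: column_minima_def row_minima_def)
  have "card F \<le> card (column_minima F \<union> row_minima F)"
    using join_free_subset_minima assms(4) \<open>finite (column_minima F)\<close> \<open>finite (row_minima F)\<close>
    by (intro card_mono) (auto simp: join_free_def)
  also have "\<dots> \<le> card (column_minima F) + card (row_minima F)"
    by (rule card_Un_le)
  also have "\<dots> \<le> card {1..k} + card {1..l}"
    using assms(3) by (intro add_mono card_column_minima_le card_row_minima_le) auto
  finally show ?thesis by simp
qed

end
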